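(* Let $\mathcal H$ be a well-structured preconditioner set, $\epsilon>0$, $\eta>0$, $T\in\mathbb N$, let $f:\mathbb R^d\to\mathbb R$ be convex and differentiable with a global minimizer $x^*$, and let $f_0,\dots,f_{T-1}$ be random differentiable functions. Run the accelerated adaptive algorithm with $\alpha_t=2/(t+2)$. Then (whenever the expectations are finite) $$\mathbb E[f(\bar x_T)-f(x^* )]\le\frac{4}{(T+1)^2}\sum_{t=0}^{T-1}\mathbb E\big[f^{\alpha_t,\bar x_t}(x_{t+1})-f^{\alpha_t,\bar x_t}(x^* )\big].$$
   Context: $\mathcal S^d_+$ (resp. $\mathcal S^d_{++}$) denotes the set of real symmetric positive semidefinite (resp. positive definite) $d\times d$ matrices; $\langle A,B\rangle=\operatorname{Tr}(A^\top B)$. A set $\mathcal H\subseteq\mathcal S_+^d$ is a well-structured preconditioner set if $\mathcal H=\mathcal S_+^d\cap\mathcal K$ for some set $\mathcal K$ of real $d\times d$ matrices that is closed under scalar multiplication, matrix addition and matrix multiplication and contains the identity $I_d$. For $M\in\mathcal S^d_{++}$, $P_{\mathcal H}(M):=\arg\min_{H\in\mathcal H\cap\mathcal S^d_{++}}\langle M,H^{-1}\rangle+\operatorname{Tr}(H)$ (the minimizer exists and is unique). For $\alpha\in(0,1]$ and $\bar x\in\mathbb R^d$, the modified losses are $f^{\alpha,\bar x}(x):=\alpha^{-2}f(\alpha x+(1-\alpha)\bar x)$ and $f_t^{\alpha,\bar x}(x):=\alpha^{-2}f_t(\alpha x+(1-\alpha)\bar x)$. Accelerated adaptive algorithm: given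 $x_0=\bar x_0$, set $M_{-1}=0$ and for $t=0,\dots,T-1$: $g_t=\nabla f_t^{\alpha_t,\bar x_t}(x_t)$, $M_t=M_{t-1}+g_tg_t^\top$, $V_t=P_{\mathcal H}(M_t+\epsilon I_d)$, $x_{t+1}=x_t-\eta V_t^{-1}g_t$, $\bar x_{t+1}=\alpha_tx_{t+1}+(1-\alpha_t)\bar x_t$. *)

theory Defs
  imports "HOL-Probability.Probability"
begin

type_synonym 'n mat = "real^'n^'n"

definition sym_mat :: "'n::finite mat \<Rightarrow> bool" where
  "sym_mat A \<longleftrightarrow> transpose A = A"

definition psd_set :: "'n::finite mat set" where
  "psd_set = {A. sym_mat A \<and> (\<forall>x. 0 \<le> x \<bullet> (A *v x))}"

definition pd_set :: "'n::finite mat set" where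
  "pd_set = {A. sym_mat A \<and> (\<forall>x. x \<noteq> 0 \<longrightarrow> 0 < x \<bullet> (A *v x))}"

definition mat_inner :: "'n::finite mat \<Rightarrow> 'n mat \<Rightarrow> real" where
  "mat_inner A B = trace (transpose A ** B)"

definition well_structured :: "'n::finite mat set \<Rightarrow> bool" where
  "well_structured H \<longleftrightarrow> (\<exists>K :: 'n mat set.
      (\<forall>c A. A \<in> K \<longrightarrow> c *\<^sub>R A \<in> K) \<and>
      (\<forall>A B. A \<in> K \<longrightarrow> B \<in> K \<longrightarrow> A + B \<in> K) \<and>
      (\<forall>A B. A \<in> K \<longrightarrow> B \<in> K \<longrightarrow> A ** B \<in> K) \<and>
      mat 1 \<in> K \<and>
      H = psd_set \<inter> K)"

definition precond_proj :: "'n::finite mat set \<Rightarrow> 'n mat \<Rightarrow> 'n mat" where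
  "precond_proj H M = (THE V. V \<in> H \<inter> pd_set \<and>
      (\<forall>W \<in> H \<inter> pd_set. mat_inner M (matrix_inv V) + trace V
                          \<le> mat_inner M (matrix_inv W) + trace W))"

definition grad :: "(real^'n::finite \<Rightarrow> real) \<Rightarrow> real^'n \<Rightarrow> real^'n" where
  "grad f x = (THE g. (f has_derivative (\<lambda>h. g \<bullet> h)) (at x))"

definition modloss :: "real \<Rightarrow> real^'n::finite \<Rightarrow> (real^'n \<Rightarrow> real) \<Rightarrow> real^'n \<Rightarrow> real" where
  "modloss \<alpha> xb f x = f (\<alpha> *\<^sub>R x + (1 - \<alpha>) *\<^sub>R xb) / \<alpha>\<^sup>2"

definition outer :: "real^'n::finite \<Rightarrow> real^'n \<Rightarrow> 'n mat" where
  "outer u v = (\<chi> i j. u $ i * v $ j)"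

text \<open>Accelerated adaptive algorithm. accel H \<epsilon> \<eta> \<alpha> fs x0 t = (x_t, xbar_t, M_{t-1}),
  with M_{-1} = 0.\<close>
fun accel :: "'n::finite mat set \<Rightarrow> real \<Rightarrow> real \<Rightarrow> (nat \<Rightarrow> real)
      \<Rightarrow> (nat \<Rightarrow> real^'n \<Rightarrow> real) \<Rightarrow> real^'n \<Rightarrow> nat \<Rightarrow> (real^'n) \<times> (real^'n) \<times> 'n mat" where
  "accel H \<epsilon> \<eta> \<alpha> fs x0 0 = (x0, x0, 0)"
| "accel H \<epsilon> \<eta> \<alpha> fs x0 (Suc t) =
     (let (x, xb, Mp) = accel H \<epsilon> \<eta> \<alpha> fs x0 t;
          g = grad (modloss (\<alpha> t) xb (fs t)) x;
          M = Mp + outer g g;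
          V = precond_proj H (M + \<epsilon> *\<^sub>R mat 1);
          x' = x - \<eta> *\<^sub>R (matrix_inv V *v g);
          xb' = \<alpha> t *\<^sub>R x' + (1 - \<alpha> t) *\<^sub>R xb
      in (x', xb', M))"

definition xs_seq where "xs_seq H \<epsilon> \<eta> \<alpha> fs x0 t = fst (accel H \<epsilon> \<eta> \<alpha> fs x0 t)"
definition xbar_seq where "xbar_seq H \<epsilon> \<eta> \<alpha> fs x0 t = fst (snd (accel H \<epsilon> \<eta> \<alpha> fs x0 t))"

end

theory Submission
  imports Defs
begin

text \<open>Convexity of \<open>f\<close> at \<open>\<alpha> x\<^sup>* + (1 - \<alpha>) xbar\<^sub>t\<close> bounds the t-th modified-loss gap
  from below by \<open>\<alpha>\<^sub>t\<^sup>-\<^sup>2 D\<^sub>t\<^sub>+\<^sub>1 - (1 - \<alpha>\<^sub>t) \<alpha>\<^sub>t\<^sup>-\<^sup>2 D\<^sub>t\<close>, where \<open>D\<^sub>t = f(xbar\<^sub>t) - f(x\<^sup>*) \<ge> 0\<close>.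
  For \<open>\<alpha>\<^sub>t = 2/(t+2)\<close> the weights are \<open>(t+2)\<^sup>2/4\<close> and \<open>t(t+2)/4 \<le> (t+1)\<^sup>2/4\<close>, so the gaps
  telescope to at least \<open>(T+1)\<^sup>2/4 D\<^sub>T\<close> on every sample path; taking expectations gives the
  claim. Only the averaging step \<open>xbar\<^sub>t\<^sub>+\<^sub>1 = \<alpha>\<^sub>t x\<^sub>t\<^sub>+\<^sub>1 + (1 - \<alpha>\<^sub>t) xbar\<^sub>t\<close> of the algorithm is used.\<close>

lemma xbar_seq_Suc:
  "xbar_seq H \<epsilon> \<eta> \<alpha> fs x0 (Suc t) =
     \<alpha> t *\<^sub>R xs_seq H \<epsilon> \<eta> \<alpha> fs x0 (Suc t) + (1 - \<alpha> t) *\<^sub>R xbar_seq H \<epsilon> \<eta> \<alpha> fs x0 t"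
  unfolding xbar_seq_def xs_seq_def
  by (cases "accel H \<epsilon> \<eta> \<alpha> fs x0 t") (simp add: Let_def)

lemma modloss_gap_ge:
  fixes f :: "real^'d::finite \<Rightarrow> real"
  assumes "convex_on UNIV f" and "0 < a" "a \<le> 1"
  shows "modloss a xb f xn - modloss a xb f xstar
     \<ge> (f (a *\<^sub>R xn + (1 - a) *\<^sub>R xb) - f xstar) / a\<^sup>2 - (1 - a) / a\<^sup>2 * (f xb - f xstar)"
proof -
  have "f (a *\<^sub>R xstar + (1 - a) *\<^sub>R xb) \<le> a * f xstar + (1 - a) * f xb"
    using convex_onD[OF assms(1), of "1 - a" xstar xb] assms(2,3) by simp
  then have "modloss a xb f xn - modloss a xb f xstar
      \<ge> (f (a *\<^sub>R xn + (1 - a) *\<^sub>R xb) - (a * f xstar + (1 - a) * f xb)) / a\<^sup>2"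
    unfolding modloss_def by (simp add: diff_divide_distrib[symmetric] divide_right_mono)
  also have "(y - (a * f xstar + (1 - a) * f xb)) / a\<^sup>2
      = (y - f xstar) / a\<^sup>2 - (1 - a) / a\<^sup>2 * (f xb - f xstar)" for y
    using assms(2) by (simp add: field_simps)
  finally show ?thesis .
qed

lemma modloss_gap_sum_ge:
  fixes f :: "real^'d::finite \<Rightarrow> real" and xs xb :: "nat \<Rightarrow> real^'d"
  assumes cvx: "convex_on UNIV f" and min: "\<And>x. f xstar \<le> f x"
    and xb_Suc: "\<And>t. xb (Suc t) = \<alpha> t *\<^sub>R xs (Suc t) + (1 - \<alpha> t) *\<^sub>R xb t"
    and \<alpha>: "\<alpha> = (\<lambda>t. 2 / (real t + 2))"
    and "T \<ge> 1"
  shows "(real T + 1)\<^sup>2 / 4 * (f (xb T) - f xstar)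
     \<le> (\<Sum>t<T. modloss (\<alpha> t) (xb t) f (xs (Suc t)) - modloss (\<alpha> t) (xb t) f xstar)"
proof -
  have gap: "modloss (\<alpha> t) (xb t) f (xs (Suc t)) - modloss (\<alpha> t) (xb t) f xstar
     \<ge> (real t + 2)\<^sup>2 / 4 * (f (xb (Suc t)) - f xstar)
       - real t * (real t + 2) / 4 * (f (xb t) - f xstar)" for t
  proof -
    have "modloss (\<alpha> t) (xb t) f (xs (Suc t)) - modloss (\<alpha> t) (xb t) f xstar
        \<ge> (f (xb (Suc t)) - f xstar) / (\<alpha> t)\<^sup>2 - (1 - \<alpha> t) / (\<alpha> t)\<^sup>2 * (f (xb t) - f xstar)"
      unfolding xb_Suc by (rule modloss_gap_ge[OF cvx]) (simp_all add: \<alpha>)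
    moreover have "1 - \<alpha> t = real t / (real t + 2)" by (simp add: \<alpha> field_simps)
    then have "(1 - \<alpha> t) / (\<alpha> t)\<^sup>2 = real t * (real t + 2) / 4"
      by (simp add: \<alpha> power2_eq_square)
    moreover have "x / (\<alpha> t)\<^sup>2 = (real t + 2)\<^sup>2 / 4 * x" for x
      by (simp add: \<alpha> power2_eq_square)
    ultimately show ?thesis by simp
  qed
  show ?thesis
    using \<open>T \<ge> 1\<close>
  proof (induction T rule: dec_induct)
    case base
    show ?case using gap[of 0] by simp
  next
    case (step T)
    have "real T * (real T + 2) / 4 * (f (xb T) - f xstar)
        \<le> (real T + 1)\<^sup>2 / 4 * (f (xb T) - f xstar)"
      using min[of "xb T"] by (intro mult_right_mono) (simp_all add: power2_eq_square field_simps)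
    moreover have "(real (Suc T) + 1)\<^sup>2 = (real T + 2)\<^sup>2" by simp
    ultimately show ?case using step.IH gap[of T] by (simp only: sum.lessThan_Suc)
  qed
qed

theorem lemmaD1:
  fixes M :: "'w measure"
    and H :: "('d::finite) mat set"
    and \<epsilon> \<eta> :: real and T :: nat
    and f :: "real^'d \<Rightarrow> real" and xstar x0 :: "real^'d"
    and fs :: "'w \<Rightarrow> nat \<Rightarrow> real^'d \<Rightarrow> real"
  assumes "prob_space M"
    and "well_structured H"
    and "\<epsilon> > 0" and "\<eta> > 0" and "T \<ge> 1"
    and "convex_on UNIV f" and "\<And>x. f differentiable (at x)"
    and "\<And>x. f xstar \<le> f x"
    and "\<And>\<omega> t x. \<omega> \<in> space M \<Longrightarrow> t < T \<Longrightarrow> fs \<omega> t differentiable (at x)"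
  defines "\<alpha> \<equiv> (\<lambda>t::nat. 2 / (real t + 2))"
  defines "xs \<equiv> (\<lambda>\<omega>. xs_seq H \<epsilon> \<eta> \<alpha> (fs \<omega>) x0)"
    and "xb \<equiv> (\<lambda>\<omega>. xbar_seq H \<epsilon> \<eta> \<alpha> (fs \<omega>) x0)"
  assumes "integrable M (\<lambda>\<omega>. f (xb \<omega> T) - f xstar)"
    and "\<And>t. t < T \<Longrightarrow> integrable M (\<lambda>\<omega>.
            modloss (\<alpha> t) (xb \<omega> t) f (xs \<omega> (Suc t)) - modloss (\<alpha> t) (xb \<omega> t) f xstar)"
  shows "(\<integral>\<omega>. f (xb \<omega> T) - f xstar \<partial>M)
    \<le> 4 / (real T + 1)\<^sup>2 * (\<Sum>t<T. \<integral>\<omega>.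
            modloss (\<alpha> t) (xb \<omega> t) f (xs \<omega> (Suc t)) - modloss (\<alpha> t) (xb \<omega> t) f xstar \<partial>M)"
proof -
  let ?gap = "\<lambda>\<omega> t. modloss (\<alpha> t) (xb \<omega> t) f (xs \<omega> (Suc t)) - modloss (\<alpha> t) (xb \<omega> t) f xstar"
  have pathwise: "f (xb \<omega> T) - f xstar \<le> 4 / (real T + 1)\<^sup>2 * (\<Sum>t<T. ?gap \<omega> t)" for \<omega>
    using modloss_gap_sum_ge[OF assms(6,8), of "xb \<omega>" \<alpha> "xs \<omega>" T] assms(5)
    by (simp add: xs_def xb_def xbar_seq_Suc \<alpha>_def field_simps)
  have "(\<integral>\<omega>. f (xb \<omega> T) - f xstar \<partial>M) \<le> (\<integral>\<omega>. 4 / (real T + 1)\<^sup>2 * (\<Sum>t<T. ?gap \<omega> t) \<partial>M)"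
    using assms(13,14) pathwise by (intro integral_mono integrable_mult_right integrable_sum) auto
  also have "\<dots> = 4 / (real T + 1)\<^sup>2 * (\<Sum>t<T. \<integral>\<omega>. ?gap \<omega> t \<partial>M)"
    using assms(14) by (simp add: integral_sum)
  finally show ?thesis .
qed

end
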